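(* Let $a>0$, $\alpha\in[0,1)$, $f\in\mathcal C_a$ and $g=\mathrm{Sh}_\alpha(f)$. Then $g\in\mathcal P$, $g$ is differentiable on $(a_g,b_g)$ with $g'(x)<\alpha$ for all $x\in(a_g,b_g)$, and $\mathrm{gr}(g)$ is stable under the shaking $\mathrm{Sh}_\alpha$, i.e. $\mathrm{Sh}_\alpha(\mathrm{gr}(g))=\mathrm{gr}(g)$.
   Context: $\mathcal C_a$ is the set of $C^1$ functions $f:\mathbb R\to\mathbb R$ that are even, satisfy $f(s)=|s|$ for $|s|\ge a$ and are strictly convex on $[-a,a]$. For $f\in\mathcal C_a$: $F_\alpha(s)=f(s)-\alpha s$, $x_\alpha^+=(f')^{-1}(\alpha)\in[0,a)$ (inverse of $f':[-a,a]\to[-1,1]$); let $F_\alpha^{-1}$ be the inverse of $F_\alpha|_{[x_\alpha^+,\infty)}$, $\phi=F_\alpha^{-1}\circ F_\alpha$, $\delta_x=(1-\alpha)^{-1}F_\alpha(x)-\phi(x)$, $s_\alpha=x_\alpha^++\delta_{x_\alpha^+}$; $x\mapsto x+\delta_x$ is an increasing bijection $(-\infty,x_\alpha^+]\to(-\infty,s_\alpha]$ with inverse $\tau$. Define $\mathrm{Sh}_\alpha(f)(x)=\alpha x+F_\alpha(\tau(x))$ for $x\le s_\alpha$ and $=x$ for $x>s_\alpha$. $\mathcal P$ is the set of continuous $g:\mathbb R\to\mathbb R$ with $g(x)\ge|x|$ for all $x$, $g(x)=|x|$ for $|x|$ large, and $g(x_0)\ne|x_0|$ for some $x_0$; for $g\in\mathcal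 P$, $a_g=\inf\{x:g(x)\ne|x|\}$, $b_g=\sup\{x:g(x)\ne|x|\}$, $\mathrm{gr}(g)=\{(x,y)\in[a_g,b_g]\times\mathbb R_{\ge0}:|x|\le y\le g(x)\}$. Shaking of sets: $D$ is the line $y=-x$, $v_\alpha$ the unit vector positively collinear to $(1,\alpha)$; for compact $K\subseteq\mathbb R^2$, $\mathrm{Sh}_\alpha(K)=\bigcup_{p\in D}K^p$ with $K^p=\emptyset$ if $K\cap(p+\mathbb Rv_\alpha)=\emptyset$ and otherwise the segment from $p$ to $p+|K\cap(p+\mathbb Rv_\alpha)|\,v_\alpha$ ($|\cdot|$ one-dimensional Lebesgue measure). *)

theory Defs
  imports "HOL-Analysis.Analysis"
begin

definition strictly_convex_on :: "real set \<Rightarrow> (real \<Rightarrow> real) \<Rightarrow> bool" where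
  "strictly_convex_on S f \<longleftrightarrow> convex S \<and>
     (\<forall>x\<in>S. \<forall>y\<in>S. \<forall>t. x \<noteq> y \<and> 0 < t \<and> t < 1 \<longrightarrow>
        f ((1 - t) * x + t * y) < (1 - t) * f x + t * f y)"

definition class_C :: "real \<Rightarrow> (real \<Rightarrow> real) set" where
  "class_C a = {f. f C1_differentiable_on UNIV \<and> (\<forall>s. f (-s) = f s)
      \<and> (\<forall>s. \<bar>s\<bar> \<ge> a \<longrightarrow> f s = \<bar>s\<bar>) \<and> strictly_convex_on {-a..a} f}"

definition Fa :: "(real \<Rightarrow> real) \<Rightarrow> real \<Rightarrow> real \<Rightarrow> real" where
  "Fa f \<alpha> s = f s - \<alpha> * s"

definition xplus :: "real \<Rightarrow> (real \<Rightarrow> real) \<Rightarrow> real \<Rightarrow> real" where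
  "xplus a f \<alpha> = (THE x. x \<in> {-a..a} \<and> deriv f x = \<alpha>)"

definition Fa_inv :: "real \<Rightarrow> (real \<Rightarrow> real) \<Rightarrow> real \<Rightarrow> real \<Rightarrow> real" where
  "Fa_inv a f \<alpha> y = (THE s. s \<ge> xplus a f \<alpha> \<and> Fa f \<alpha> s = y)"

definition phi :: "real \<Rightarrow> (real \<Rightarrow> real) \<Rightarrow> real \<Rightarrow> real \<Rightarrow> real" where
  "phi a f \<alpha> x = Fa_inv a f \<alpha> (Fa f \<alpha> x)"

definition delta :: "real \<Rightarrow> (real \<Rightarrow> real) \<Rightarrow> real \<Rightarrow> real \<Rightarrow> real" where
  "delta a f \<alpha> x = Fa f \<alpha> x / (1 - \<alpha>) - phi a f \<alpha> x"

definition s_alpha :: "real \<Rightarrow> (real \<Rightarrow> real) \<Rightarrow> real \<Rightarrow> real" where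
  "s_alpha a f \<alpha> = xplus a f \<alpha> + delta a f \<alpha> (xplus a f \<alpha>)"

text \<open>tau: inverse of x \<mapsto> x + delta_x, from (-inf, x^+] onto (-inf, s_alpha].\<close>
definition tau :: "real \<Rightarrow> (real \<Rightarrow> real) \<Rightarrow> real \<Rightarrow> real \<Rightarrow> real" where
  "tau a f \<alpha> y = (THE x. x \<le> xplus a f \<alpha> \<and> x + delta a f \<alpha> x = y)"

definition shake_fun :: "real \<Rightarrow> real \<Rightarrow> (real \<Rightarrow> real) \<Rightarrow> real \<Rightarrow> real" where
  "shake_fun a \<alpha> f x =
     (if x \<le> s_alpha a f \<alpha> then \<alpha> * x + Fa f \<alpha> (tau a f \<alpha> x) else x)"

definition class_P :: "(real \<Rightarrow> real) set" where
  "class_P = {g. continuous_on UNIV g \<and> (\<forall>x. g x \<ge> \<bar>x\<bar>)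
      \<and> (\<exists>R. \<forall>x. \<bar>x\<bar> \<ge> R \<longrightarrow> g x = \<bar>x\<bar>) \<and> (\<exists>x0. g x0 \<noteq> \<bar>x0\<bar>)}"

definition a_of :: "(real \<Rightarrow> real) \<Rightarrow> real" where
  "a_of g = Inf {x. g x \<noteq> \<bar>x\<bar>}"

definition b_of :: "(real \<Rightarrow> real) \<Rightarrow> real" where
  "b_of g = Sup {x. g x \<noteq> \<bar>x\<bar>}"

definition gr :: "(real \<Rightarrow> real) \<Rightarrow> (real \<times> real) set" where
  "gr g = {(x, y). a_of g \<le> x \<and> x \<le> b_of g \<and> 0 \<le> y \<and> \<bar>x\<bar> \<le> y \<and> y \<le> g x}"

definition lineD :: "(real \<times> real) set" where
  "lineD = {(t, -t) | t. True}"

definition v_dir :: "real \<Rightarrow> real \<times> real" where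
  "v_dir \<alpha> = (1 / norm ((1::real), \<alpha>)) *\<^sub>R (1, \<alpha>)"

definition chord :: "real \<Rightarrow> (real \<times> real) set \<Rightarrow> real \<times> real \<Rightarrow> (real \<times> real) set" where
  "chord \<alpha> K p =
     (if K \<inter> {p + t *\<^sub>R v_dir \<alpha> | t. True} = {} then {}
      else closed_segment p (p + measure lborel {t::real. p + t *\<^sub>R v_dir \<alpha> \<in> K} *\<^sub>R v_dir \<alpha>))"

definition shake_set :: "real \<Rightarrow> (real \<times> real) set \<Rightarrow> (real \<times> real) set" where
  "shake_set \<alpha> K = (\<Union>p\<in>lineD. chord \<alpha> K p)"

end

theory Submission
  imports Defs
begin

(* Write F = F_alpha and shift x = x + delta_x, the map inverted by tau. Since f' <= 1, F rises
   with slope at most 1 - alpha on its increasing branch [x_alpha^+, inf); comparing the two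
   points of a level set of F, this makes shift strictly increasing on (-inf, x_alpha^+], with
   derivative >= 1. Hence on (-inf, s_alpha] the function g x - alpha x = F (tau x) is strictly
   decreasing, with derivative F'(tau x) tau'(x) < 0, while g = |.| outside (-a, s_alpha) and
   g > |.| inside. So every line of slope alpha meets gr(g) in a segment starting where it
   crosses y = -x, and a set all of whose sections in the direction v_alpha are segments
   starting on that line is unchanged by shaking. *)

section \<open>Convexity, derivatives and inverses of real functions\<close>

lemma convex_on_deriv_le_slope:
  fixes f :: "real \<Rightarrow> real"
  assumes "convex_on I f" "x \<in> I" "y \<in> I" "x < y" "(f has_real_derivative D) (at x)"
  shows "D \<le> (f y - f x) / (y - x)"
proof (rule tendsto_upperbound)
  show "((\<lambda>t. (f t - f x) / (t - x)) \<longlongrightarrow> D) (at_right x)"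
    using assms(5) by (simp add: has_field_derivative_iff filterlim_at_split)
  show "\<forall>\<^sub>F t in at_right x. (f t - f x) / (t - x) \<le> (f y - f x) / (y - x)"
    using eventually_at_right_real[OF \<open>x < y\<close>]
  proof eventually_elim
    case (elim t)
    then have "(f x - f t) / (x - t) \<le> (f x - f y) / (x - y)"
      using convex_on_slope_le(1)[OF assms(1-3)] by auto
    then show ?case by (metis minus_diff_eq minus_divide_divide)
  qed
qed simp

lemma convex_on_slope_le_deriv:
  fixes f :: "real \<Rightarrow> real"
  assumes "convex_on I f" "x \<in> I" "y \<in> I" "x < y" "(f has_real_derivative D) (at y)"
  shows "(f y - f x) / (y - x) \<le> D"
proof (rule tendsto_lowerbound)
  show "((\<lambda>t. (f t - f y) / (t - y)) \<longlongrightarrow> D) (at_left y)"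
    using assms(5) by (simp add: has_field_derivative_iff filterlim_at_split)
  show "\<forall>\<^sub>F t in at_left y. (f y - f x) / (y - x) \<le> (f t - f y) / (t - y)"
    using eventually_at_left_real[OF \<open>x < y\<close>]
  proof eventually_elim
    case (elim t)
    then have "(f x - f y) / (x - y) \<le> (f t - f y) / (t - y)"
      using convex_on_slope_le(2)[OF assms(1-3)] by auto
    then show ?case by (metis minus_diff_eq minus_divide_divide)
  qed
qed simp

lemma strictly_convex_on_imp_convex_on:
  "strictly_convex_on S f \<Longrightarrow> convex_on S f"
  unfolding strictly_convex_on_def
  by (intro convex_on_linorderI) (auto intro: less_imp_le)

lemma strictly_convex_on_deriv_less:
  fixes f :: "real \<Rightarrow> real"
  assumes f: "strictly_convex_on S f" and "x \<in> S" "y \<in> S" "x < y"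
    and "(f has_real_derivative Dx) (at x)" "(f has_real_derivative Dy) (at y)"
  shows "Dx < Dy"
proof -
  define m where "m = (x + y) / 2"
  have "is_interval S"
    using f by (simp add: strictly_convex_on_def is_interval_convex_1)
  then have "m \<in> S"
    by (rule mem_is_interval_1_I[OF _ assms(2,3)]) (use \<open>x < y\<close> in \<open>auto simp: m_def\<close>)
  have "\<forall>t. x \<noteq> y \<and> 0 < t \<and> t < 1 \<longrightarrow> f ((1 - t) * x + t * y) < (1 - t) * f x + t * f y"
    using f assms(2,3) unfolding strictly_convex_on_def by blast
  from spec[OF this, of "1/2"] have "f m - f x < f y - f m"
    using \<open>x < y\<close> by (simp add: m_def add_divide_distrib)
  then have "(f m - f x) / ((y - x) / 2) < (f y - f m) / ((y - x) / 2)"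
    using \<open>x < y\<close> by (intro divide_strict_right_mono) auto
  moreover have "m - x = (y - x) / 2" "y - m = (y - x) / 2"
    by (simp_all add: m_def field_simps)
  ultimately have "(f m - f x) / (m - x) < (f y - f m) / (y - m)"
    by (simp only:)
  moreover have "Dx \<le> (f m - f x) / (m - x)"
    using strictly_convex_on_imp_convex_on[OF f] \<open>x \<in> S\<close> \<open>m \<in> S\<close> \<open>x < y\<close> assms(5)
    by (intro convex_on_deriv_le_slope) (auto simp: m_def)
  moreover have "(f y - f m) / (y - m) \<le> Dy"
    using strictly_convex_on_imp_convex_on[OF f] \<open>y \<in> S\<close> \<open>m \<in> S\<close> \<open>x < y\<close> assms(6)
    by (intro convex_on_slope_le_deriv) (auto simp: m_def)
  ultimately show ?thesis by linarith
qed

lemma DERIV_unique_on_set: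
  assumes "(f has_real_derivative D) (at x)" "(g has_real_derivative E) (at x)"
    and "x \<in> S" "at x within S \<noteq> bot" "\<And>y. y \<in> S \<Longrightarrow> f y = g y"
  shows "D = E"
proof (rule has_field_derivative_unique)
  show "(g has_real_derivative D) (at x within S)"
    using has_field_derivative_at_within[OF assms(1)] zero_less_one assms(3)
    by (rule has_field_derivative_transform_within) (use assms(5) in auto)
qed (use assms(2,4) has_field_derivative_at_within in auto)

lemma continuous_on_inverse_Icc:
  fixes h k :: "real \<Rightarrow> real"
  assumes "continuous_on {p..q} h" "p \<le> q" "\<And>x. x \<in> {p..q} \<Longrightarrow> k (h x) = x"
  shows "continuous_on {h p..h q} k"
proof (rule continuous_on_subset)
  show "continuous_on (h ` {p..q}) k" by (rule continuous_on_inv) (use assms in auto)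
  show "{h p..h q} \<subseteq> h ` {p..q}"
  proof
    fix y assume "y \<in> {h p..h q}"
    then obtain x where "p \<le> x" "x \<le> q" "h x = y" using IVT'[of h p y q] assms by auto
    then show "y \<in> h ` {p..q}" by auto
  qed
qed

section \<open>Sets fixed by shaking\<close>

lemma closed_segment_eq_ray_image:
  fixes p v :: "'a::real_vector"
  assumes "0 \<le> L"
  shows "closed_segment p (p + L *\<^sub>R v) = (\<lambda>t. p + t *\<^sub>R v) ` {0..L}"
proof -
  have "closed_segment p (p + L *\<^sub>R v) = (+) p ` closed_segment 0 (L *\<^sub>R v)"
    using closed_segment_translation[of p 0 "L *\<^sub>R v"] by simp
  also have "closed_segment 0 (L *\<^sub>R v) = (\<lambda>t. t *\<^sub>R v) ` closed_segment 0 L"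
    using closed_segment_linear_image[of "\<lambda>t. t *\<^sub>R v" 0 L] by (simp add: linear_scaleR_left)
  also have "closed_segment 0 L = {0..L}"
    using assms by (simp add: closed_segment_eq_real_ivl)
  finally show ?thesis by (simp add: image_image)
qed

lemma line_point_v_dir:
  "p + t *\<^sub>R v_dir \<alpha> = (fst p + t / norm (1::real, \<alpha>), snd p + \<alpha> * t / norm (1::real, \<alpha>))"
  by (simp add: v_dir_def prod_eq_iff)

lemma chord_eq_Int_line:
  fixes K :: "(real \<times> real) set"
  assumes "\<alpha> \<noteq> -1" and sections: "\<And>c. \<exists>e. {x. (x, \<alpha> * x + c) \<in> K} = {-c / (1 + \<alpha>)..e}"
    and "p \<in> lineD"
  shows "chord \<alpha> K p = K \<inter> {p + t *\<^sub>R v_dir \<alpha> | t. True}"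
proof -
  define n where "n = norm (1::real, \<alpha>)"
  have "0 < n" by (simp add: n_def prod_eq_iff)
  obtain t0 where p: "p = (t0, -t0)" using \<open>p \<in> lineD\<close> unfolding lineD_def by auto
  define c where "c = -(1 + \<alpha>) * t0"
  have "t0 = -c / (1 + \<alpha>)" using \<open>\<alpha> \<noteq> -1\<close> by (simp add: c_def field_simps)
  with sections obtain e where e: "{x. (x, \<alpha> * x + c) \<in> K} = {t0..e}" by metis
  define L where "L = n * (e - t0)"
  have on_line: "p + t *\<^sub>R v_dir \<alpha> = (t0 + t / n, \<alpha> * (t0 + t / n) + c)" for t
    by (simp add: line_point_v_dir p c_def n_def algebra_simps)
  have T: "p + t *\<^sub>R v_dir \<alpha> \<in> K \<longleftrightarrow> t \<in> {0..L}" for t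
  proof -
    have "p + t *\<^sub>R v_dir \<alpha> \<in> K \<longleftrightarrow> t0 + t / n \<in> {t0..e}"
      unfolding on_line e[symmetric] by simp
    also have "\<dots> \<longleftrightarrow> t \<in> {0..L}"
      using \<open>0 < n\<close> by (auto simp: L_def field_simps)
    finally show ?thesis .
  qed
  have line_section: "K \<inter> {p + t *\<^sub>R v_dir \<alpha> | t. True} = (\<lambda>t. p + t *\<^sub>R v_dir \<alpha>) ` {0..L}"
    using T by auto
  show ?thesis
  proof (cases "0 \<le> L")
    case True
    have "{t. p + t *\<^sub>R v_dir \<alpha> \<in> K} = {0..L}"
      using T by blast
    then have "measure lborel {t. p + t *\<^sub>R v_dir \<alpha> \<in> K} = L"
      using True by simp
    moreover have "K \<inter> {p + t *\<^sub>R v_dir \<alpha> | t. True} \<noteq> {}"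
      unfolding line_section using True by auto
    ultimately have "chord \<alpha> K p = closed_segment p (p + L *\<^sub>R v_dir \<alpha>)"
      unfolding chord_def by simp
    also have "\<dots> = (\<lambda>t. p + t *\<^sub>R v_dir \<alpha>) ` {0..L}"
      using True by (rule closed_segment_eq_ray_image)
    finally show ?thesis unfolding line_section .
  next
    case False
    then show ?thesis unfolding chord_def line_section by simp
  qed
qed

lemma lineD_lines_cover:
  fixes z :: "real \<times> real"
  assumes "\<alpha> \<noteq> -1"
  shows "\<exists>p\<in>lineD. z \<in> {p + t *\<^sub>R v_dir \<alpha> | t. True}"
proof -
  obtain x y where z: "z = (x, y)" by fastforce
  define t0 where "t0 = (\<alpha> * x - y) / (1 + \<alpha>)"
  define n where "n = norm (1::real, \<alpha>)"
  have "0 < n" by (simp add: n_def prod_eq_iff)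
  have "(t0, -t0) + (n * (x - t0)) *\<^sub>R v_dir \<alpha> = (x, -t0 + \<alpha> * (x - t0))"
    unfolding line_point_v_dir n_def[symmetric] using \<open>0 < n\<close> by simp
  also have "-t0 + \<alpha> * (x - t0) = \<alpha> * x - (1 + \<alpha>) * t0"
    by (simp add: algebra_simps)
  also have "(1 + \<alpha>) * t0 = \<alpha> * x - y"
    using \<open>\<alpha> \<noteq> -1\<close> by (simp add: t0_def)
  finally have "(t0, -t0) + (n * (x - t0)) *\<^sub>R v_dir \<alpha> = z" by (simp add: z)
  moreover have "(t0, -t0) \<in> lineD" by (auto simp: lineD_def)
  ultimately show ?thesis by blast
qed

lemma shake_set_eq_self:
  fixes K :: "(real \<times> real) set"
  assumes "\<alpha> \<noteq> -1"
    and "\<And>c. \<exists>e. {x. (x, \<alpha> * x + c) \<in> K} = {-c / (1 + \<alpha>)..e}"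
      (* the line y = alpha x + c crosses lineD at x = -c / (1 + alpha);
         an empty section is the case e < -c / (1 + alpha) *)
  shows "shake_set \<alpha> K = K"
proof
  show "shake_set \<alpha> K \<subseteq> K"
    unfolding shake_set_def using chord_eq_Int_line[OF assms] by auto
  show "K \<subseteq> shake_set \<alpha> K"
  proof
    fix z assume "z \<in> K"
    obtain p where "p \<in> lineD" "z \<in> {p + t *\<^sub>R v_dir \<alpha> | t. True}"
      using lineD_lines_cover[OF assms(1)] by blast
    then have "z \<in> chord \<alpha> K p"
      using chord_eq_Int_line[OF assms] \<open>z \<in> K\<close> by simp
    then show "z \<in> shake_set \<alpha> K"
      unfolding shake_set_def using \<open>p \<in> lineD\<close> by (rule UN_I[rotated])
  qed
qed

lemma closed_gr_line_section:
  fixes g :: "real \<Rightarrow> real"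
  assumes "continuous_on UNIV g"
  shows "closed {x. (x, \<alpha> * x + c) \<in> gr g}"
proof -
  have "closed {x \<in> {a_of g..b_of g}. \<alpha> * x + c \<le> g x}"
    by (rule continuous_on_closed_Collect_le)
      (auto intro: continuous_intros continuous_on_subset[OF assms])
  moreover have "closed {x. \<bar>x\<bar> \<le> \<alpha> * x + c}"
    by (intro closed_Collect_le continuous_intros)
  moreover have "{x. (x, \<alpha> * x + c) \<in> gr g}
      = {x \<in> {a_of g..b_of g}. \<alpha> * x + c \<le> g x} \<inter> {x. \<bar>x\<bar> \<le> \<alpha> * x + c}"
    by (auto simp: gr_def)
  ultimately show ?thesis by (simp add: closed_Int)
qed

lemma gr_line_sections:
  fixes g :: "real \<Rightarrow> real"
  assumes "-1 < \<alpha>" "\<alpha> < 1" and "continuous_on UNIV g" and "g (a_of g) = - a_of g"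
    and antitone: "\<And>x y. a_of g \<le> x \<Longrightarrow> x \<le> y \<Longrightarrow> y \<le> b_of g \<Longrightarrow> g y - \<alpha> * y \<le> g x - \<alpha> * x"
  shows "\<exists>e. {x. (x, \<alpha> * x + c) \<in> gr g} = {-c / (1 + \<alpha>)..e}"
proof -
  define A B where "A = a_of g" and "B = b_of g"
  define S where "S = {x. (x, \<alpha> * x + c) \<in> gr g}"
  define t0 where "t0 = -c / (1 + \<alpha>)"
  have S: "x \<in> S \<longleftrightarrow> A \<le> x \<and> x \<le> B \<and> \<bar>x\<bar> \<le> \<alpha> * x + c \<and> \<alpha> * x + c \<le> g x" for x
    by (auto simp: S_def gr_def A_def B_def)
  have "0 < 1 + \<alpha>" using assms(1) by simp
  then have t0_le_iff: "t0 \<le> x \<longleftrightarrow> -x \<le> \<alpha> * x + c"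
    and le_t0_iff: "x \<le> t0 \<longleftrightarrow> \<alpha> * x + c \<le> -x" for x
    by (auto simp: t0_def field_simps)
  show ?thesis
  proof (cases "S = {}")
    case True
    then show ?thesis by (intro exI[of _ "t0 - 1"]) (auto simp: S_def t0_def)
  next
    case False
    have "bdd_above S" using S by (intro bdd_aboveI[of _ B]) auto
    moreover have "closed S" unfolding S_def using assms(3) by (rule closed_gr_line_section)
    ultimately have "Sup S \<in> S" using False closed_contains_Sup by blast
    define e where "e = Sup S"
    have e: "A \<le> e" "e \<le> B" "\<bar>e\<bar> \<le> \<alpha> * e + c" "\<alpha> * e + c \<le> g e"
      using \<open>Sup S \<in> S\<close> S[of e] by (auto simp: e_def)
    have below_e: "c \<le> g x - \<alpha> * x" if "A \<le> x" "x \<le> e" for x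
      using antitone[of x e] that e unfolding A_def B_def by linarith
    from this[of A] have "A \<le> t0"
      using e assms(4) le_t0_iff[of A] unfolding A_def by simp
    have "S = {t0..e}"
    proof (intro set_eqI iffI)
      fix x assume "x \<in> S"
      then show "x \<in> {t0..e}"
        using t0_le_iff[of x] S[of x] cSup_upper[OF _ \<open>bdd_above S\<close>] by (auto simp: e_def abs_le_iff)
    next
      fix x assume x: "x \<in> {t0..e}"
      have "(1 - \<alpha>) * x \<le> (1 - \<alpha>) * e" using x \<open>\<alpha> < 1\<close> by (intro mult_left_mono) auto
      then have "x \<le> \<alpha> * x + c" using e(3) by (simp add: algebra_simps abs_le_iff)
      moreover have "-x \<le> \<alpha> * x + c" using x t0_le_iff by simp
      moreover have "\<alpha> * x + c \<le> g x" using below_e[of x] \<open>A \<le> t0\<close> x by simp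
      ultimately show "x \<in> S" using x e(2) \<open>A \<le> t0\<close> S[of x] by (simp add: abs_le_iff)
    qed
    then show ?thesis unfolding S_def t0_def by (rule exI)
  qed
qed

section \<open>The class C_a\<close>

locale class_C_function =
  fixes a :: real and f :: "real \<Rightarrow> real"
  assumes a_pos: "0 < a" and f_in_class_C: "f \<in> class_C a"
begin

abbreviation f' :: "real \<Rightarrow> real" where "f' \<equiv> deriv f"

lemma f_has_deriv: "(f has_real_derivative f' x) (at x)"
  and continuous_f': "continuous_on UNIV f'"
proof -
  obtain D where D: "\<And>x. (f has_vector_derivative D x) (at x)" "continuous_on UNIV D"
    using f_in_class_C unfolding class_C_def C1_differentiable_on_def by auto
  have "(f has_real_derivative D x) (at x)" for x
    using D(1) by (simp add: has_real_derivative_iff_has_vector_derivative)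
  moreover from this have "f' = D" using DERIV_imp_deriv by blast
  ultimately show "(f has_real_derivative f' x) (at x)" "continuous_on UNIV f'"
    using D(2) by auto
qed

lemma continuous_on_f: "continuous_on S f"
  using DERIV_isCont[OF f_has_deriv] by (rule continuous_at_imp_continuous_on[OF ballI])

lemma f_eq_abs: "a \<le> \<bar>s\<bar> \<Longrightarrow> f s = \<bar>s\<bar>"
  using f_in_class_C unfolding class_C_def by auto

lemma f'_eq_1: "a \<le> x \<Longrightarrow> f' x = 1"
  by (rule DERIV_unique_on_set[OF f_has_deriv DERIV_ident, where S = "{x..}"])
    (use a_pos f_eq_abs in \<open>auto simp: at_within_Ici_at_right\<close>)

lemma f'_eq_minus_1: "x \<le> -a \<Longrightarrow> f' x = -1"
  by (rule DERIV_unique_on_set[OF f_has_deriv DERIV_minus[OF DERIV_ident], where S = "{..x}"])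
    (use a_pos f_eq_abs in \<open>auto simp: at_within_Iic_at_left\<close>)

lemma f'_strict_mono: "-a \<le> x \<Longrightarrow> x < y \<Longrightarrow> y \<le> a \<Longrightarrow> f' x < f' y"
  using f_in_class_C unfolding class_C_def
  by (intro strictly_convex_on_deriv_less[OF _ _ _ _ f_has_deriv f_has_deriv]) auto

lemma f'_less_1: "x < a \<Longrightarrow> f' x < 1"
  using f'_eq_minus_1[of x] f'_strict_mono[of x a] f'_eq_1[of a] a_pos
  by (cases "x \<le> -a") auto

lemma f'_greater_minus_1: "-a < x \<Longrightarrow> -1 < f' x"
  using f'_eq_1[of x] f'_strict_mono[of "-a" x] f'_eq_minus_1[of "-a"] a_pos
  by (cases "a \<le> x") auto

lemma f'_le_1: "f' x \<le> 1"
  using f'_less_1[of x] f'_eq_1[of x] by (cases "x < a") auto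

lemma f_minus_id_antitone: "x \<le> y \<Longrightarrow> f y - y \<le> f x - x"
  using DERIV_nonpos_imp_nonincreasing[of x y "\<lambda>s. f s - s"]
    DERIV_diff[OF f_has_deriv DERIV_ident] f'_le_1 by force

lemma abs_less_f: assumes "-a < s" "s < a" shows "\<bar>s\<bar> < f s"
proof -
  have "f a - a < f s - s"
  proof (rule DERIV_neg_imp_decreasing_open[OF \<open>s < a\<close>])
    fix z assume "s < z" "z < a"
    then show "\<exists>d. ((\<lambda>s. f s - s) has_real_derivative d) (at z) \<and> d < 0"
      using DERIV_diff[OF f_has_deriv DERIV_ident] f'_less_1 by force
  qed (intro continuous_intros continuous_on_f)
  moreover have "f (-a) - a < f s + s"
  proof (rule DERIV_pos_imp_increasing_open[OF \<open>-a < s\<close>, of "\<lambda>s. f s + s", simplified])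
    fix z assume "-a < z" "z < s"
    then show "\<exists>d. ((\<lambda>s. f s + s) has_real_derivative d) (at z) \<and> 0 < d"
      using DERIV_add[OF f_has_deriv DERIV_ident] f'_greater_minus_1 by force
  qed (intro continuous_intros continuous_on_f)
  ultimately show ?thesis using f_eq_abs[of a] f_eq_abs[of "-a"] a_pos by auto
qed

lemma abs_le_f: "\<bar>s\<bar> \<le> f s"
  using abs_less_f[of s] f_eq_abs[of s] by (cases "\<bar>s\<bar> < a") (auto simp: abs_less_iff)

end

section \<open>Shaking a function of the class C_a\<close>

locale class_C_shaking = class_C_function +
  fixes \<alpha> :: real
  assumes alpha_nonneg: "0 \<le> \<alpha>" and alpha_less_1: "\<alpha> < 1"
begin

abbreviation F :: "real \<Rightarrow> real" where "F \<equiv> Fa f \<alpha>"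

lemma F_has_deriv: "(F has_real_derivative f' x - \<alpha>) (at x)"
  unfolding Fa_def[abs_def] by (auto intro!: derivative_eq_intros f_has_deriv)

lemma continuous_on_F: "continuous_on S F"
  unfolding Fa_def[abs_def] by (intro continuous_intros continuous_on_f)

lemma F_eq_right: "a \<le> s \<Longrightarrow> F s = (1 - \<alpha>) * s"
  using f_eq_abs[of s] a_pos by (simp add: Fa_def algebra_simps)

lemma F_eq_left: "s \<le> -a \<Longrightarrow> F s = -(1 + \<alpha>) * s"
  using f_eq_abs[of s] a_pos by (simp add: Fa_def algebra_simps)

abbreviation xp :: real where "xp \<equiv> xplus a f \<alpha>"

lemma xplus: "-a < xp" "xp < a" "f' xp = \<alpha>"
proof -
  have "\<exists>!x. x \<in> {-a..a} \<and> f' x = \<alpha>"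
  proof (rule ex_ex1I)
    show "\<exists>x. x \<in> {-a..a} \<and> f' x = \<alpha>"
      using IVT'[of f' "-a" \<alpha> a] continuous_on_subset[OF continuous_f'] f'_eq_minus_1 f'_eq_1
        alpha_nonneg alpha_less_1 a_pos by force
    show "x = y" if "x \<in> {-a..a} \<and> f' x = \<alpha>" "y \<in> {-a..a} \<and> f' y = \<alpha>" for x y
      using f'_strict_mono[of x y] f'_strict_mono[of y x] that by (cases x y rule: linorder_cases) auto
  qed
  then have "xp \<in> {-a..a} \<and> f' xp = \<alpha>"
    unfolding xplus_def by (rule theI')
  then show "-a < xp" "xp < a" "f' xp = \<alpha>"
    using f'_eq_minus_1[of "-a"] f'_eq_1[of a] alpha_nonneg alpha_less_1 by (auto simp: less_le)
qed

lemma f'_less_alpha: "x < xp \<Longrightarrow> f' x < \<alpha>"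
  using f'_eq_minus_1[of x] f'_strict_mono[of x xp] xplus alpha_nonneg by (cases "x \<le> -a") auto

lemma f'_greater_alpha: "xp < x \<Longrightarrow> \<alpha> < f' x"
  using f'_eq_1[of x] f'_strict_mono[of xp x] xplus alpha_less_1 by (cases "a \<le> x") auto

lemma F_strict_antimono: assumes "x < y" "y \<le> xp" shows "F y < F x"
proof (rule DERIV_neg_imp_decreasing_open[OF \<open>x < y\<close>])
  fix z assume "x < z" "z < y"
  then show "\<exists>d. (F has_real_derivative d) (at z) \<and> d < 0"
    using F_has_deriv f'_less_alpha assms by force
qed (rule continuous_on_F)

lemma F_strict_mono: assumes "xp \<le> x" "x < y" shows "F x < F y"
proof (rule DERIV_pos_imp_increasing_open[OF \<open>x < y\<close>])
  fix z assume "x < z" "z < y"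
  then show "\<exists>d. (F has_real_derivative d) (at z) \<and> 0 < d"
    using F_has_deriv f'_greater_alpha assms by force
qed (rule continuous_on_F)

lemma F_antimono: "x \<le> y \<Longrightarrow> y \<le> xp \<Longrightarrow> F y \<le> F x"
  using F_strict_antimono[of x y] by (cases "x = y") auto

lemma F_mono: "xp \<le> x \<Longrightarrow> x \<le> y \<Longrightarrow> F x \<le> F y"
  using F_strict_mono[of x y] by (cases "x = y") auto

lemma F_xplus_le: "F xp \<le> F x"
  using F_antimono[of x xp] F_mono[of xp x] by (cases "x \<le> xp") auto

lemma F_xplus_pos: "0 < F xp"
proof -
  have "\<alpha> * xp \<le> \<alpha> * \<bar>xp\<bar>" by (rule mult_left_mono) (simp_all add: alpha_nonneg)
  also have "\<dots> \<le> \<bar>xp\<bar>" by (rule mult_left_le_one_le) (simp_all add: alpha_nonneg alpha_less_1 less_imp_le)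
  finally show ?thesis using abs_less_f[of xp] xplus by (simp add: Fa_def)
qed

lemma F_diff_le: "u \<le> v \<Longrightarrow> F v - F u \<le> (1 - \<alpha>) * (v - u)"
  using f_minus_id_antitone[of u v] by (simp add: Fa_def algebra_simps)

lemma F_unbounded: "\<exists>M\<ge>a. y \<le> F M"
proof (intro exI conjI)
  define M where "M = a + \<bar>y\<bar> / (1 - \<alpha>)"
  show "a \<le> M" using alpha_less_1 by (simp add: M_def)
  then have "F M = (1 - \<alpha>) * M" by (rule F_eq_right)
  also have "\<dots> = (1 - \<alpha>) * a + \<bar>y\<bar>"
    using alpha_less_1 by (simp add: M_def field_simps)
  finally show "y \<le> F M"
    using alpha_less_1 a_pos mult_pos_pos[of "1 - \<alpha>" a] by linarith
qed

abbreviation Finv :: "real \<Rightarrow> real" where "Finv \<equiv> Fa_inv a f \<alpha>"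

lemma ex1_F_right_branch: "F xp \<le> y \<Longrightarrow> \<exists>!s. xp \<le> s \<and> F s = y"
proof (rule ex_ex1I)
  assume "F xp \<le> y"
  obtain M where "a \<le> M" "y \<le> F M" using F_unbounded by blast
  then show "\<exists>s. xp \<le> s \<and> F s = y"
    using IVT'[of F xp y M] continuous_on_F \<open>F xp \<le> y\<close> xplus by force
next
  show "s = t" if "xp \<le> s \<and> F s = y" "xp \<le> t \<and> F t = y" for s t
    using F_strict_mono[of s t] F_strict_mono[of t s] that by (cases s t rule: linorder_cases) auto
qed

lemma Fa_inv: "F xp \<le> y \<Longrightarrow> xp \<le> Finv y \<and> F (Finv y) = y"
  unfolding Fa_inv_def by (rule theI'[OF ex1_F_right_branch])

lemma Fa_inv_F: "xp \<le> s \<Longrightarrow> Finv (F s) = s"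
  unfolding Fa_inv_def by (rule the1_equality[OF ex1_F_right_branch[OF F_xplus_le]]) simp

lemma continuous_on_Fa_inv: "xp \<le> M \<Longrightarrow> continuous_on {F xp..F M} Finv"
  by (rule continuous_on_inverse_Icc[OF continuous_on_F]) (auto intro: Fa_inv_F)

lemma Fa_inv_has_deriv:
  assumes "F xp < w"
  shows "(Finv has_real_derivative inverse (f' (Finv w) - \<alpha>)) (at w)"
proof (rule DERIV_inverse_function[where a = "F xp" and b = "w + 1"])
  obtain M where "a \<le> M" "w + 1 \<le> F M" using F_unbounded by blast
  then show "isCont Finv w"
    using continuous_on_interior[OF continuous_on_Fa_inv[of M]] assms xplus by fastforce
  have "xp \<le> Finv w" "F (Finv w) = w" using Fa_inv[of w] assms by auto
  then have "xp < Finv w" using assms by (auto simp: le_less)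
  then show "f' (Finv w) - \<alpha> \<noteq> 0" using f'_greater_alpha by fastforce
qed (use assms F_has_deriv Fa_inv in auto)

abbreviation \<phi> :: "real \<Rightarrow> real" where "\<phi> \<equiv> phi a f \<alpha>"

lemma phi: "xp \<le> \<phi> x" "F (\<phi> x) = F x"
  using Fa_inv[OF F_xplus_le[of x]] by (auto simp: phi_def)

lemma xplus_less_phi: "x < xp \<Longrightarrow> xp < \<phi> x"
  using phi[of x] F_strict_antimono[of x xp] by (auto simp: le_less)

lemma phi_xplus: "\<phi> xp = xp"
  by (simp add: phi_def Fa_inv_F)

lemma phi_eq_left: assumes "x \<le> -a" shows "\<phi> x = F x / (1 - \<alpha>)"
proof -
  have "(1 - \<alpha>) * a \<le> (1 + \<alpha>) * -x"
    using assms alpha_nonneg a_pos by (intro mult_mono) auto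
  then have "a * (1 - \<alpha>) \<le> F x"
    using F_eq_left[OF assms] by (simp add: algebra_simps)
  then have "a \<le> F x / (1 - \<alpha>)"
    using alpha_less_1 by (subst pos_le_divide_eq) auto
  moreover from this have "F (F x / (1 - \<alpha>)) = F x"
    using F_eq_right alpha_less_1 by simp
  ultimately show ?thesis
    using Fa_inv_F[of "F x / (1 - \<alpha>)"] xplus by (simp add: phi_def)
qed

lemma continuous_on_phi:
  assumes "m \<le> xp"
  shows "continuous_on {m..xp} \<phi>"
proof -
  have "F ` {m..xp} \<subseteq> {F xp..F (\<phi> m)}"
    using F_antimono[of m] F_xplus_le phi(2)[of m] assms by auto
  then have "continuous_on {m..xp} (\<lambda>x. Finv (F x))"
    by (rule continuous_on_compose2[OF continuous_on_Fa_inv[OF phi(1)[of m]] continuous_on_F])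
  then show ?thesis by (simp add: phi_def[abs_def])
qed

definition shift :: "real \<Rightarrow> real" where
  "shift x = x + delta a f \<alpha> x"

lemma shift_eq: "shift x = x + F x / (1 - \<alpha>) - \<phi> x"
  by (simp add: shift_def delta_def)

lemma shift_eq_left: "x \<le> -a \<Longrightarrow> shift x = x"
  by (simp add: shift_eq phi_eq_left)

abbreviation sa :: real where "sa \<equiv> s_alpha a f \<alpha>"

lemma s_alpha_eq_shift: "sa = shift xp"
  by (simp add: s_alpha_def shift_def)

lemma s_alpha_eq: "sa = F xp / (1 - \<alpha>)"
  by (simp add: s_alpha_eq_shift shift_eq phi_xplus)

lemma s_alpha_pos: "0 < sa"
  using F_xplus_pos alpha_less_1 by (simp add: s_alpha_eq)

lemma shift_strict_mono:
  assumes "x < y" "y \<le> xp"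
  shows "shift x < shift y"
proof -
  have "F y < F x" using F_strict_antimono assms by blast
  then have "\<phi> y \<le> \<phi> x" using F_strict_mono[of "\<phi> x" "\<phi> y"] phi by force
  then have "F (\<phi> x) - F (\<phi> y) \<le> (1 - \<alpha>) * (\<phi> x - \<phi> y)" by (rule F_diff_le)
  then have "(F x - F y) / (1 - \<alpha>) \<le> \<phi> x - \<phi> y"
    using alpha_less_1 phi(2) by (simp add: pos_divide_le_eq mult.commute)
  then show ?thesis using assms by (simp add: shift_eq diff_divide_distrib)
qed

lemma shift_mono: "x \<le> y \<Longrightarrow> y \<le> xp \<Longrightarrow> shift x \<le> shift y"
  using shift_strict_mono[of x y] by (cases "x = y") auto

lemma continuous_on_shift: "m \<le> xp \<Longrightarrow> continuous_on {m..xp} shift"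
  unfolding shift_eq[abs_def] using alpha_less_1
  by (intro continuous_intros continuous_on_F continuous_on_phi) auto

lemma shift_has_deriv:
  assumes "x < xp"
  shows "\<exists>D. (shift has_real_derivative D) (at x) \<and> 1 \<le> D"
proof -
  define A B where "A = f' x - \<alpha>" and "B = f' (\<phi> x) - \<alpha>"
  have "F xp < F x" using F_strict_antimono assms by blast
  then have "(Finv has_real_derivative inverse B) (at (F x))"
    using Fa_inv_has_deriv by (simp add: B_def phi_def)
  then have "((\<lambda>z. Finv (F z)) has_real_derivative inverse B * A) (at x)"
    using F_has_deriv unfolding A_def by (rule DERIV_chain2)
  then have "(shift has_real_derivative 1 + A / (1 - \<alpha>) - inverse B * A) (at x)"
    unfolding shift_eq[abs_def] phi_def A_def
    by (intro DERIV_diff DERIV_add DERIV_ident DERIV_cdivide F_has_deriv)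
  moreover have "A / B \<le> A / (1 - \<alpha>)"
  proof (rule divide_left_mono_neg)
    show "A \<le> 0" using f'_less_alpha[OF assms] by (simp add: A_def)
    show "0 < B * (1 - \<alpha>)" "B \<le> 1 - \<alpha>"
      using f'_greater_alpha[OF xplus_less_phi[OF assms]] f'_le_1[of "\<phi> x"] alpha_less_1
      by (auto simp: B_def)
  qed
  ultimately show ?thesis by (intro exI conjI) (auto simp: divide_inverse mult.commute)
qed

abbreviation \<tau> :: "real \<Rightarrow> real" where "\<tau> \<equiv> tau a f \<alpha>"

lemma ex1_shift_left_branch: "y \<le> sa \<Longrightarrow> \<exists>!x. x \<le> xp \<and> shift x = y"
proof (rule ex_ex1I)
  assume "y \<le> sa"
  define m where "m = min y (-a)"
  have "m \<le> xp" "shift m \<le> y" using xplus shift_eq_left[of m] by (auto simp: m_def)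
  then show "\<exists>x. x \<le> xp \<and> shift x = y"
    using IVT'[of shift m y xp] continuous_on_shift \<open>y \<le> sa\<close> s_alpha_eq_shift by force
next
  show "x = x'" if "x \<le> xp \<and> shift x = y" "x' \<le> xp \<and> shift x' = y" for x x'
    using shift_strict_mono[of x x'] shift_strict_mono[of x' x] that
    by (cases x x' rule: linorder_cases) auto
qed

lemma tau: "y \<le> sa \<Longrightarrow> \<tau> y \<le> xp \<and> shift (\<tau> y) = y"
  unfolding tau_def shift_def[symmetric] by (rule theI'[OF ex1_shift_left_branch])

lemma tau_shift: "x \<le> xp \<Longrightarrow> \<tau> (shift x) = x"
  unfolding tau_def shift_def[symmetric]
  by (rule the1_equality[OF ex1_shift_left_branch]) (auto simp: s_alpha_eq_shift shift_mono)

lemma tau_eq_left: "y \<le> -a \<Longrightarrow> \<tau> y = y"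
  using tau_shift[of y] shift_eq_left[of y] xplus by auto

lemma tau_s_alpha: "\<tau> sa = xp"
  using tau_shift[of xp] s_alpha_eq_shift by simp

lemma tau_strict_mono: assumes "y < y'" "y' \<le> sa" shows "\<tau> y < \<tau> y'"
proof (rule ccontr)
  assume "\<not> \<tau> y < \<tau> y'"
  moreover have "y \<le> sa" using assms by simp
  ultimately have "shift (\<tau> y') \<le> shift (\<tau> y)" using shift_mono[of "\<tau> y'" "\<tau> y"] tau by simp
  then show False using tau[of y] tau[of y'] assms \<open>y \<le> sa\<close> by simp
qed

lemma tau_mono: "y \<le> y' \<Longrightarrow> y' \<le> sa \<Longrightarrow> \<tau> y \<le> \<tau> y'"
  using tau_strict_mono[of y y'] by (cases "y = y'") auto

lemma continuous_on_tau: "continuous_on {-a..sa} \<tau>"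
  using continuous_on_inverse_Icc[OF continuous_on_shift[of "-a"], of \<tau>] xplus tau_shift
    shift_eq_left[of "-a"] s_alpha_eq_shift by auto

lemma tau_between: "-a < y \<Longrightarrow> y < sa \<Longrightarrow> -a < \<tau> y \<and> \<tau> y < xp"
  using tau_strict_mono[of "-a" y] tau_strict_mono[of y sa] tau_eq_left[of "-a"] tau_s_alpha by auto

lemma tau_has_deriv:
  assumes "-a < y" "y < sa"
  shows "\<exists>D. (\<tau> has_real_derivative D) (at y) \<and> 0 < D"
proof -
  obtain D where D: "(shift has_real_derivative D) (at (\<tau> y))" "1 \<le> D"
    using shift_has_deriv tau_between[OF assms] by blast
  have "(\<tau> has_real_derivative inverse D) (at y)"
  proof (rule DERIV_inverse_function[where f = shift and a = "-a" and b = sa])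
    show "isCont \<tau> y"
      using continuous_on_interior[OF continuous_on_tau] assms by simp
  qed (use D assms tau in auto)
  then show ?thesis using D(2) by auto
qed

abbreviation g :: "real \<Rightarrow> real" where "g \<equiv> shake_fun a \<alpha> f"

lemma g_eq_low: "y \<le> sa \<Longrightarrow> g y = \<alpha> * y + F (\<tau> y)"
  by (simp add: shake_fun_def)

lemma g_eq_abs: assumes "y \<le> -a \<or> sa \<le> y" shows "g y = \<bar>y\<bar>"
proof -
  consider "y \<le> -a" | "y = sa" | "sa < y" using assms by fastforce
  then show ?thesis
  proof cases
    case 1
    then have "g y = f y" using s_alpha_pos a_pos by (simp add: g_eq_low tau_eq_left Fa_def)
    then show ?thesis using f_eq_abs 1 a_pos by simp
  next
    case 2
    have "F xp = (1 - \<alpha>) * sa" using alpha_less_1 by (simp add: s_alpha_eq)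
    then show ?thesis using 2 s_alpha_pos by (simp add: g_eq_low tau_s_alpha algebra_simps)
  next
    case 3
    then show ?thesis using s_alpha_pos by (simp add: shake_fun_def)
  qed
qed

lemma abs_less_g:
  assumes "-a < y" "y < sa"
  shows "\<bar>y\<bar> < g y"
proof -
  define x where "x = \<tau> y"
  have x: "-a < x" "x < xp" "shift x = y"
    using tau_between[OF assms] tau assms by (auto simp: x_def)
  have g: "g y = \<alpha> * y + F x" using assms by (simp add: g_eq_low x_def)
  have "x < \<phi> x" using xplus_less_phi[OF x(2)] x by simp
  then have "y < F x / (1 - \<alpha>)" using x(3) by (simp add: shift_eq)
  then have "y < g y" using alpha_less_1 g by (simp add: pos_less_divide_eq algebra_simps)
  have "(1 - \<alpha>) * \<phi> x \<le> F (\<phi> x)" using abs_le_f[of "\<phi> x"] by (simp add: Fa_def algebra_simps)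
  then have "\<phi> x \<le> F x / (1 - \<alpha>)" using alpha_less_1 phi(2) by (simp add: pos_le_divide_eq mult.commute)
  then have "x \<le> y" using x(3) by (simp add: shift_eq)
  then have "(1 + \<alpha>) * x \<le> (1 + \<alpha>) * y" using alpha_nonneg by (intro mult_left_mono) auto
  moreover have "0 < F x + (1 + \<alpha>) * x" using abs_less_f[of x] x xplus by (simp add: Fa_def algebra_simps)
  ultimately have "-y < g y" using g by (simp add: algebra_simps)
  with \<open>y < g y\<close> show ?thesis by simp
qed

lemma g_neq_abs_iff: "g y \<noteq> \<bar>y\<bar> \<longleftrightarrow> y \<in> {-a<..<sa}"
  using g_eq_abs[of y] abs_less_g[of y] by (cases "y \<le> -a \<or> sa \<le> y") auto

lemma g_minus_linear_antitone:
  assumes "-a \<le> y" "y \<le> y'" "y' \<le> sa"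
  shows "g y' - \<alpha> * y' \<le> g y - \<alpha> * y"
  using F_antimono[OF tau_mono[OF assms(2,3)]] tau[of y'] assms by (simp add: g_eq_low)

lemma continuous_g: "continuous_on UNIV g"
proof -
  have "continuous_on {..-a} g"
    using continuous_on_rabs[OF continuous_on_id] by (rule continuous_on_eq) (simp add: g_eq_abs)
  moreover have "continuous_on {-a..sa} (\<lambda>y. \<alpha> * y + F (\<tau> y))"
    using continuous_on_compose2[OF continuous_on_F continuous_on_tau subset_UNIV]
    by (intro continuous_intros)
  then have "continuous_on {-a..sa} g"
    by (rule continuous_on_eq) (simp add: g_eq_low)
  moreover have "continuous_on {sa..} g"
    using continuous_on_id by (rule continuous_on_eq) (use s_alpha_pos g_eq_abs in auto)
  ultimately have "continuous_on ({..-a} \<union> {-a..sa} \<union> {sa..}) g"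
    by (intro continuous_on_closed_Un) auto
  moreover have "{..-a} \<union> {-a..sa} \<union> {sa..} = UNIV" using s_alpha_pos a_pos by auto
  ultimately show ?thesis by simp
qed

lemma g_in_class_P: "g \<in> class_P"
  unfolding class_P_def
proof (intro CollectI conjI)
  show "continuous_on UNIV g" by (rule continuous_g)
  show "\<forall>x. \<bar>x\<bar> \<le> g x"
  proof
    fix x show "\<bar>x\<bar> \<le> g x"
      using g_eq_abs[of x] abs_less_g[of x] by (cases "x \<le> -a \<or> sa \<le> x") auto
  qed
  show "\<exists>R. \<forall>x. R \<le> \<bar>x\<bar> \<longrightarrow> g x = \<bar>x\<bar>"
  proof (intro exI allI impI)
    fix x assume "a + sa \<le> \<bar>x\<bar>"
    then have "x \<le> -a \<or> sa \<le> x" using a_pos s_alpha_pos by (cases "0 \<le> x") auto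
    then show "g x = \<bar>x\<bar>" by (rule g_eq_abs)
  qed
  show "\<exists>x0. g x0 \<noteq> \<bar>x0\<bar>" using g_neq_abs_iff[of 0] a_pos s_alpha_pos by (intro exI[of _ 0]) auto
qed

lemma a_of_g: "a_of g = -a" and b_of_g: "b_of g = sa"
proof -
  have "{x. g x \<noteq> \<bar>x\<bar>} = {-a<..<sa}" using g_neq_abs_iff by blast
  then show "a_of g = -a" "b_of g = sa" using s_alpha_pos a_pos by (simp_all add: a_of_def b_of_def)
qed

lemma g_has_deriv_less_alpha:
  assumes "-a < y" "y < sa"
  shows "\<exists>d. (g has_real_derivative d) (at y) \<and> d < \<alpha>"
proof -
  obtain D where D: "(\<tau> has_real_derivative D) (at y)" "0 < D"
    using tau_has_deriv[OF assms] by blast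
  have "\<tau> y < xp" using tau_between[OF assms] by simp
  then have neg: "(f' (\<tau> y) - \<alpha>) * D < 0"
    using f'_less_alpha D(2) by (simp add: mult_neg_pos)
  have "((\<lambda>y. \<alpha> * y + F (\<tau> y)) has_real_derivative \<alpha> + (f' (\<tau> y) - \<alpha>) * D) (at y)"
    using DERIV_add[OF DERIV_cmult[OF DERIV_ident] DERIV_chain2[OF F_has_deriv D(1)]] by simp
  then have "(g has_real_derivative \<alpha> + (f' (\<tau> y) - \<alpha>) * D) (at y)"
    by (rule has_field_derivative_transform_within_open[where S = "{..<sa}"])
      (use assms g_eq_low in auto)
  with neg show ?thesis by (intro exI conjI) auto
qed

lemma shake_set_gr_g: "shake_set \<alpha> (gr g) = gr g"
proof (rule shake_set_eq_self)
  show "\<alpha> \<noteq> -1" using alpha_nonneg by simp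
  show "\<exists>e. {x. (x, \<alpha> * x + c) \<in> gr g} = {-c / (1 + \<alpha>)..e}" for c
    using alpha_nonneg alpha_less_1 continuous_g a_pos g_eq_abs[of "-a"] g_minus_linear_antitone
    by (intro gr_line_sections) (auto simp: a_of_g b_of_g)
qed

end

theorem proposition4p5:
  fixes a \<alpha> :: real and f :: "real \<Rightarrow> real"
  assumes "a > 0" and "0 \<le> \<alpha>" and "\<alpha> < 1" and "f \<in> class_C a"
  defines "g \<equiv> shake_fun a \<alpha> f"
  shows "g \<in> class_P
    \<and> (\<forall>x\<in>{a_of g<..<b_of g}. \<exists>d. (g has_real_derivative d) (at x) \<and> d < \<alpha>)
    \<and> shake_set \<alpha> (gr g) = gr g"
proof -
  interpret class_C_shaking a f \<alpha>
    using assms(1-4) by unfold_locales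
  show ?thesis
    unfolding assms(5) using g_in_class_P g_has_deriv_less_alpha shake_set_gr_g
    by (auto simp: a_of_g b_of_g)
qed

end
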